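(* Let $\mathcal{S}$, $\mathcal{C}$ and the inequality $(\star)$ be as in the context, and suppose Assumption 1 holds. If $\bar{\boldsymbol{\pi}}\in\mathcal{C}$ yields an inequality $(\star)$ that is valid for $\operatorname{proj}_{\mathbf{x}}\operatorname{conv}(\mathcal{S})$ and non-vertical, then $\bar\alpha^j_k>0$ for some $j\in M\cup\{0\}$ and $k\in K$.
   Context: Let $N=\{1,\dots,n\}$, $M=\{1,\dots,m\}$, $K=\{1,\dots,\kappa\}$, $T=\{1,\dots,\tau\}$. Given $A^k\in\mathbb{R}^{m\times n}$ (entries $A^k_{j,i}$), $\mathbf{b}^k\in\mathbb{R}^n$, $\mathbf{c}^k\in\mathbb{R}^m$ (entries $c^k_j$), $d_k\in\mathbb{R}$ for $k\in K$, $E\in\mathbb{R}^{\tau\times n}$, $\mathbf{f}\in\mathbb{R}^\tau$, let $\Xi=\{\mathbf{x}\in\mathbb{R}^n_+ : E\mathbf{x}\ge\mathbf{f}\}$, $\Delta_m=\{\mathbf{y}\in\mathbb{Z}^m_+ : \mathbf{1}^\top\mathbf{y}\le 1\}$, $\mathcal{S}=\{(\mathbf{x};\mathbf{y})\in\Xi\times\Delta_m : \mathbf{y}^\top A^k\mathbf{x}+(\mathbf{b}^k)^\top\mathbf{x}+(\mathbf{c}^k)^\top\mathbf{y}\ge d_k\ \forall k\in K\}$, and $\mathcal{S}(\mathbf{e}^j)=\{(\mathbf{x};\mathbf{y})\in\mathcal{S}:\mathbf{y}=\mathbf{e}^j\}$ where $\mathbf{e}^j$ is the $j$-th unit vector ($j\in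 M$) and $\mathbf{e}^0=\mathbf{0}$. Assumption 1: $\mathcal{S}(\mathbf{e}^j)\ne\emptyset$ for all $j\in M\cup\{0\}$ and all these sets share the same recession cone. For $\boldsymbol{\pi}=(\boldsymbol{\alpha}^0,\dots,\boldsymbol{\alpha}^m;\boldsymbol{\beta}^0,\dots,\boldsymbol{\beta}^m;\boldsymbol{\gamma}^0,\dots,\boldsymbol{\gamma}^m;\theta_0,\dots,\theta_m)$ with $\boldsymbol{\alpha}^j\in\mathbb{R}^\kappa$, $\boldsymbol{\beta}^j\in\mathbb{R}^\tau$, $\boldsymbol{\gamma}^j\in\mathbb{R}^n$, $\theta_j\in\mathbb{R}$, define $\Phi_{i,j}(\boldsymbol{\pi})=\sum_{k=1}^\kappa\big((A^k_{j,i}+b^k_i)\alpha^j_k-b^k_i\alpha^0_k\big)+\sum_{t=1}^\tau E_{t,i}(\beta^j_t-\beta^0_t)$ and $\Psi_j(\boldsymbol{\pi})=\sum_{k=1}^\kappa\big((c^k_j-d_k)\alpha^j_k+d_k\alpha^0_k\big)+\sum_{t=1}^\tau f_t(\beta^0_t-\beta^j_t)$. $\mathcal{C}$ is the set of all such $\boldsymbol{\pi}\ge\mathbf{0}$ with $\Phi_{i,j}(\boldsymbol{\pi})+\gamma^j_i-\gamma^0_i=0$ for all $i\in N,j\in M$ and $\Psi_j(\boldsymbol{\pi})+\theta_j-\theta_0=0$ for all $j\in M$. The inequality $(\star)$ associated with $\bar{\boldsymbol{\pi}}$ is $\big(\sum_k\bar\alpha^0_k\mathbf{b}^k+E^\top\bar{\boldsymbol{\beta}}^0+\bar{\boldsymbol{\gamma}}^0\big)^\top\mathbf{x}\ge\sum_k\bar\alpha^0_kd_k+(\bar{\boldsymbol{\beta}}^0)^\top\mathbf{f}-\bar\theta_0$.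 A valid inequality for $\operatorname{proj}_{\mathbf{x}}\operatorname{conv}(\mathcal{S})$ is called vertical if it is implied by the constraints describing $\Xi$ (i.e., $E\mathbf{x}\ge\mathbf{f}$, $\mathbf{x}\ge\mathbf{0}$). *)

theory Defs
  imports "HOL-Analysis.Analysis"
begin

text \<open>N and M are encoded by finite index types 'n and 'm
  (x :: real^'n, y :: real^'m). The index set M \<union> {0} of the
  multipliers is encoded as 'm option, with None standing for 0 and Some j for j.
  Data: A k $ j $ i = A^k_{j,i}, b k $ i = b^k_i, c k $ j = c^k_j, d k = d_k,
  E t $ i = E_{t,i} (row t of E), f t = f_t.\<close>

definition Xi :: "'t set \<Rightarrow> ('t \<Rightarrow> real^'n) \<Rightarrow> ('t \<Rightarrow> real) \<Rightarrow> (real^'n) set" where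
  "Xi T E f = {x. (\<forall>i. 0 \<le> x $ i) \<and> (\<forall>t\<in>T. E t \<bullet> x \<ge> f t)}"

definition Delta :: "(real^'m) set" where
  "Delta = {y. (\<forall>j. y $ j \<in> \<int> \<and> 0 \<le> y $ j) \<and> (\<Sum>j\<in>UNIV. y $ j) \<le> 1}"

definition setS :: "'k set \<Rightarrow> 't set \<Rightarrow> ('k \<Rightarrow> real^'n^'m) \<Rightarrow> ('k \<Rightarrow> real^'n)
    \<Rightarrow> ('k \<Rightarrow> real^'m) \<Rightarrow> ('k \<Rightarrow> real) \<Rightarrow> ('t \<Rightarrow> real^'n) \<Rightarrow> ('t \<Rightarrow> real)
    \<Rightarrow> ((real^'n) \<times> (real^'m)) set" where
  "setS K T A b c d E f = {(x, y). x \<in> Xi T E f \<and> y \<in> Delta \<and>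
      (\<forall>k\<in>K. y \<bullet> (A k *v x) + b k \<bullet> x + c k \<bullet> y \<ge> d k)}"

definition setS_fix :: "'k set \<Rightarrow> 't set \<Rightarrow> ('k \<Rightarrow> real^'n^'m) \<Rightarrow> ('k \<Rightarrow> real^'n)
    \<Rightarrow> ('k \<Rightarrow> real^'m) \<Rightarrow> ('k \<Rightarrow> real) \<Rightarrow> ('t \<Rightarrow> real^'n) \<Rightarrow> ('t \<Rightarrow> real)
    \<Rightarrow> real^'m \<Rightarrow> ((real^'n) \<times> (real^'m)) set" where
  "setS_fix K T A b c d E f e = {p \<in> setS K T A b c d E f. snd p = e}"

definition unitvec :: "'m option \<Rightarrow> real^'m" where
  "unitvec j = (case j of None \<Rightarrow> 0 | Some j' \<Rightarrow> axis j' 1)"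

definition rec_cone :: "'a::real_vector set \<Rightarrow> 'a set" where
  "rec_cone C = {v. \<forall>x\<in>C. \<forall>t::real. t \<ge> 0 \<longrightarrow> x + t *\<^sub>R v \<in> C}"

definition Assumption1 :: "'k set \<Rightarrow> 't set \<Rightarrow> ('k \<Rightarrow> real^'n^'m) \<Rightarrow> ('k \<Rightarrow> real^'n)
    \<Rightarrow> ('k \<Rightarrow> real^'m) \<Rightarrow> ('k \<Rightarrow> real) \<Rightarrow> ('t \<Rightarrow> real^'n) \<Rightarrow> ('t \<Rightarrow> real) \<Rightarrow> bool" where
  "Assumption1 K T A b c d E f \<longleftrightarrow>
     (\<forall>j::'m option. setS_fix K T A b c d E f (unitvec j) \<noteq> {}) \<and>
     (\<forall>j::'m option. rec_cone (setS_fix K T A b c d E f (unitvec j))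
                   = rec_cone (setS_fix K T A b c d E f (unitvec None)))"

text \<open>Multipliers: \<alpha> j k = \<alpha>^j_k, \<beta> j t = \<beta>^j_t, \<gamma> j $ i = \<gamma>^j_i, \<theta> j = \<theta>_j,
  for j :: 'm option (None = index 0).\<close>
definition Phi :: "'k set \<Rightarrow> 't set \<Rightarrow> ('k \<Rightarrow> real^'n^'m) \<Rightarrow> ('k \<Rightarrow> real^'n)
    \<Rightarrow> ('t \<Rightarrow> real^'n) \<Rightarrow> ('m option \<Rightarrow> 'k \<Rightarrow> real) \<Rightarrow> ('m option \<Rightarrow> 't \<Rightarrow> real)
    \<Rightarrow> 'n \<Rightarrow> 'm \<Rightarrow> real" where
  "Phi K T A b E \<alpha> \<beta> i j =
     (\<Sum>k\<in>K. (A k $ j $ i + b k $ i) * \<alpha> (Some j) k - b k $ i * \<alpha> None k)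
     + (\<Sum>t\<in>T. E t $ i * (\<beta> (Some j) t - \<beta> None t))"

definition Psi :: "'k set \<Rightarrow> 't set \<Rightarrow> ('k \<Rightarrow> real^'m) \<Rightarrow> ('k \<Rightarrow> real) \<Rightarrow> ('t \<Rightarrow> real)
    \<Rightarrow> ('m option \<Rightarrow> 'k \<Rightarrow> real) \<Rightarrow> ('m option \<Rightarrow> 't \<Rightarrow> real) \<Rightarrow> 'm \<Rightarrow> real" where
  "Psi K T c d f \<alpha> \<beta> j =
     (\<Sum>k\<in>K. (c k $ j - d k) * \<alpha> (Some j) k + d k * \<alpha> None k)
     + (\<Sum>t\<in>T. f t * (\<beta> None t - \<beta> (Some j) t))"

definition inC :: "'k set \<Rightarrow> 't set \<Rightarrow> ('k \<Rightarrow> real^'n^'m) \<Rightarrow> ('k \<Rightarrow> real^'n)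
    \<Rightarrow> ('k \<Rightarrow> real^'m) \<Rightarrow> ('k \<Rightarrow> real) \<Rightarrow> ('t \<Rightarrow> real^'n) \<Rightarrow> ('t \<Rightarrow> real)
    \<Rightarrow> ('m option \<Rightarrow> 'k \<Rightarrow> real) \<Rightarrow> ('m option \<Rightarrow> 't \<Rightarrow> real)
    \<Rightarrow> ('m option \<Rightarrow> real^'n) \<Rightarrow> ('m option \<Rightarrow> real) \<Rightarrow> bool" where
  "inC K T A b c d E f \<alpha> \<beta> \<gamma> \<theta> \<longleftrightarrow>
     (\<forall>j. \<forall>k\<in>K. 0 \<le> \<alpha> j k) \<and> (\<forall>j. \<forall>t\<in>T. 0 \<le> \<beta> j t) \<and>
     (\<forall>j i. 0 \<le> \<gamma> j $ i) \<and> (\<forall>j. 0 \<le> \<theta> j) \<and>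
     (\<forall>i j. Phi K T A b E \<alpha> \<beta> i j + \<gamma> (Some j) $ i - \<gamma> None $ i = 0) \<and>
     (\<forall>j. Psi K T c d f \<alpha> \<beta> j + \<theta> (Some j) - \<theta> None = 0)"

definition star_coeff :: "'k set \<Rightarrow> 't set \<Rightarrow> ('k \<Rightarrow> real^'n) \<Rightarrow> ('t \<Rightarrow> real^'n)
    \<Rightarrow> ('m option \<Rightarrow> 'k \<Rightarrow> real) \<Rightarrow> ('m option \<Rightarrow> 't \<Rightarrow> real) \<Rightarrow> ('m option \<Rightarrow> real^'n)
    \<Rightarrow> real^'n" where
  "star_coeff K T b E \<alpha> \<beta> \<gamma> =
     (\<Sum>k\<in>K. \<alpha> None k *\<^sub>R b k) + (\<Sum>t\<in>T. \<beta> None t *\<^sub>R E t) + \<gamma> None"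

definition star_rhs :: "'k set \<Rightarrow> 't set \<Rightarrow> ('k \<Rightarrow> real) \<Rightarrow> ('t \<Rightarrow> real)
    \<Rightarrow> ('m option \<Rightarrow> 'k \<Rightarrow> real) \<Rightarrow> ('m option \<Rightarrow> 't \<Rightarrow> real) \<Rightarrow> ('m option \<Rightarrow> real) \<Rightarrow> real" where
  "star_rhs K T d f \<alpha> \<beta> \<theta> =
     (\<Sum>k\<in>K. \<alpha> None k * d k) + (\<Sum>t\<in>T. \<beta> None t * f t) - \<theta> None"

definition valid_proj :: "((real^'n) \<times> (real^'m)) set \<Rightarrow> real^'n \<Rightarrow> real \<Rightarrow> bool" where
  "valid_proj S a r \<longleftrightarrow> (\<forall>x \<in> fst ` (convex hull S). a \<bullet> x \<ge> r)"

definition vertical :: "'t set \<Rightarrow> ('t \<Rightarrow> real^'n) \<Rightarrow> ('t \<Rightarrow> real) \<Rightarrow> real^'n \<Rightarrow> real \<Rightarrow> bool" where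
  "vertical T E f a r \<longleftrightarrow> (\<forall>x \<in> Xi T E f. a \<bullet> x \<ge> r)"

end

theory Submission
  imports Defs
begin

text \<open>If every \<open>\<alpha>\<^sup>j\<close> vanishes, then in particular \<open>\<alpha>\<^sup>0 = 0\<close>, and \<open>(\<star>)\<close> becomes
  \<open>(E\<^sup>T\<beta>\<^sup>0 + \<gamma>\<^sup>0)\<^sup>T x \<ge> f\<^sup>T\<beta>\<^sup>0 - \<theta>\<^sub>0\<close> with nonnegative \<open>\<beta>\<^sup>0, \<gamma>\<^sup>0, \<theta>\<^sub>0\<close>: a nonnegative
  combination of \<open>E x \<ge> f\<close> and \<open>x \<ge> 0\<close>, weakened by \<open>\<theta>\<^sub>0\<close>, hence vertical.
  Only the sign constraints of \<open>\<C>\<close> enter.\<close>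

lemma inner_nonneg_if_components_nonneg:
  fixes g x :: "real^'n"
  assumes "\<forall>i. 0 \<le> g $ i" and "\<forall>i. 0 \<le> x $ i"
  shows "0 \<le> g \<bullet> x"
  unfolding inner_vec_def using assms by (simp add: sum_nonneg)

lemma vertical_nonneg_combination:
  assumes \<mu>: "\<forall>t\<in>T. 0 \<le> \<mu> t" and g: "\<forall>i. 0 \<le> g $ i" and "0 \<le> s"
  shows "vertical T E f ((\<Sum>t\<in>T. \<mu> t *\<^sub>R E t) + g) ((\<Sum>t\<in>T. \<mu> t * f t) - s)"
  unfolding vertical_def
proof
  fix x assume "x \<in> Xi T E f"
  then have x_nonneg: "\<forall>i. 0 \<le> x $ i" and feasible: "\<forall>t\<in>T. f t \<le> E t \<bullet> x"
    unfolding Xi_def by auto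
  have "(\<Sum>t\<in>T. \<mu> t * f t) \<le> (\<Sum>t\<in>T. \<mu> t * (E t \<bullet> x))"
    using \<mu> feasible by (intro sum_mono mult_left_mono) auto
  moreover have "0 \<le> g \<bullet> x"
    using g x_nonneg by (rule inner_nonneg_if_components_nonneg)
  ultimately show "(\<Sum>t\<in>T. \<mu> t * f t) - s \<le> ((\<Sum>t\<in>T. \<mu> t *\<^sub>R E t) + g) \<bullet> x"
    using \<open>0 \<le> s\<close> by (simp add: inner_add_left inner_sum_left)
qed

lemma star_without_alpha0:
  assumes "\<forall>k\<in>K. \<alpha> None k = 0"
  shows "star_coeff K T b E \<alpha> \<beta> \<gamma> = (\<Sum>t\<in>T. \<beta> None t *\<^sub>R E t) + \<gamma> None"
    and "star_rhs K T d f \<alpha> \<beta> \<theta> = (\<Sum>t\<in>T. \<beta> None t * f t) - \<theta> None"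
  unfolding star_coeff_def star_rhs_def using assms by simp_all

theorem mainTheorem3:
  fixes K :: "'k set" and T :: "'t set"
    and A :: "'k \<Rightarrow> real^'n^'m" and b :: "'k \<Rightarrow> real^'n" and c :: "'k \<Rightarrow> real^'m"
    and d :: "'k \<Rightarrow> real" and E :: "'t \<Rightarrow> real^'n" and f :: "'t \<Rightarrow> real"
    and \<alpha> :: "'m option \<Rightarrow> 'k \<Rightarrow> real" and \<beta> :: "'m option \<Rightarrow> 't \<Rightarrow> real"
    and \<gamma> :: "'m option \<Rightarrow> real^'n" and \<theta> :: "'m option \<Rightarrow> real"
  assumes "finite K" and "finite T"
    and "Assumption1 K T A b c d E f"
    and "inC K T A b c d E f \<alpha> \<beta> \<gamma> \<theta>"
    and "valid_proj (setS K T A b c d E f) (star_coeff K T b E \<alpha> \<beta> \<gamma>) (star_rhs K T d f \<alpha> \<beta> \<theta>)"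
    and "\<not> vertical T E f (star_coeff K T b E \<alpha> \<beta> \<gamma>) (star_rhs K T d f \<alpha> \<beta> \<theta>)"
  shows "\<exists>j. \<exists>k\<in>K. \<alpha> j k > 0"
proof (rule ccontr)
  assume no_positive: "\<not> (\<exists>j. \<exists>k\<in>K. \<alpha> j k > 0)"
  have \<alpha>0_nonneg: "\<forall>k\<in>K. 0 \<le> \<alpha> None k" and \<beta>0_nonneg: "\<forall>t\<in>T. 0 \<le> \<beta> None t"
    and \<gamma>0_nonneg: "\<forall>i. 0 \<le> \<gamma> None $ i" and \<theta>0_nonneg: "0 \<le> \<theta> None"
    using \<open>inC K T A b c d E f \<alpha> \<beta> \<gamma> \<theta>\<close> unfolding inC_def by auto
  have \<alpha>0_vanishes: "\<forall>k\<in>K. \<alpha> None k = 0"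
    using no_positive \<alpha>0_nonneg by (meson antisym not_less)
  have "vertical T E f (star_coeff K T b E \<alpha> \<beta> \<gamma>) (star_rhs K T d f \<alpha> \<beta> \<theta>)"
    unfolding star_without_alpha0[where \<alpha> = \<alpha>, OF \<alpha>0_vanishes]
    by (rule vertical_nonneg_combination[OF \<beta>0_nonneg \<gamma>0_nonneg \<theta>0_nonneg])
  with \<open>\<not> vertical T E f _ _\<close> show False by contradiction
qed

end
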